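(* Let $G$ be a graph, $R$ a connected subset of $V(G)$, $v_0\in V(G)$, and $P$ a shortest path from $v_0$ to $R$. Then the number of milestones of $P$ is at most $|R|^2+1$.
   Context: $G$ is an unweighted undirected graph with shortest-path distance $\mathrm{dist}$; $R$ is connected if $G[R]$ is connected. A shortest path from $v_0$ to $R$ is a path of length $\min_{y\in R}\mathrm{dist}(v_0,y)$ from $v_0$ to a vertex of $R$; let $x$ be its unique vertex in $R$. Order $V(P)$ by $v\le_P u$ iff $u$ lies on the subpath of $P$ from $v$ to $x$. For $z\in V(G)$, the distance profile $\operatorname{prof}_{R,x}[z]\colon R\to\mathbb{Z}$ is $\operatorname{prof}_{R,x}[z](s)=\mathrm{dist}(z,s)-\mathrm{dist}(z,x)$. A vertex $v\in V(P)$ is a milestone of $P$ if $v=x$ or $\operatorname{prof}_{R,x}[v]\ne\operatorname{prof}_{R,x}[u]$ where $u$ is the successor of $v$ in $\le_P$. *)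

theory Defs
  imports "HOL-Library.FuncSet"
begin

definition graph :: "'a set \<Rightarrow> ('a \<Rightarrow> 'a \<Rightarrow> bool) \<Rightarrow> bool" where
  "graph V E \<longleftrightarrow> finite V \<and> (\<forall>u v. E u v \<longrightarrow> u \<in> V \<and> v \<in> V)
     \<and> (\<forall>u v. E u v \<longrightarrow> E v u) \<and> (\<forall>v. \<not> E v v)"

text \<open>A walk is a nonempty list of vertices, consecutive ones adjacent;
its length (number of edges) is length minus one.\<close>
definition walk :: "'a set \<Rightarrow> ('a \<Rightarrow> 'a \<Rightarrow> bool) \<Rightarrow> 'a list \<Rightarrow> bool" where
  "walk V E xs \<longleftrightarrow> xs \<noteq> [] \<and> set xs \<subseteq> V \<and>
     (\<forall>i. Suc i < length xs \<longrightarrow> E (xs ! i) (xs ! Suc i))"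

text \<open>Shortest-path distance (meaningful for vertices joined by a walk).\<close>
definition dist :: "'a set \<Rightarrow> ('a \<Rightarrow> 'a \<Rightarrow> bool) \<Rightarrow> 'a \<Rightarrow> 'a \<Rightarrow> nat" where
  "dist V E u v = (LEAST n. \<exists>xs. walk V E xs \<and> hd xs = u \<and> last xs = v \<and> length xs = Suc n)"

definition connected_set :: "'a set \<Rightarrow> ('a \<Rightarrow> 'a \<Rightarrow> bool) \<Rightarrow> 'a set \<Rightarrow> bool" where
  "connected_set V E R \<longleftrightarrow> R \<subseteq> V \<and>
     (\<forall>u\<in>R. \<forall>v\<in>R. \<exists>xs. walk V E xs \<and> set xs \<subseteq> R \<and> hd xs = u \<and> last xs = v)"

definition shortest_path_to ::
  "'a set \<Rightarrow> ('a \<Rightarrow> 'a \<Rightarrow> bool) \<Rightarrow> 'a set \<Rightarrow> 'a \<Rightarrow> 'a list \<Rightarrow> bool" where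
  "shortest_path_to V E R v0 P \<longleftrightarrow> walk V E P \<and> distinct P \<and> hd P = v0 \<and> last P \<in> R \<and>
     (\<forall>W. walk V E W \<and> hd W = v0 \<and> last W \<in> R \<longrightarrow> length P \<le> length W)"

definition prof :: "'a set \<Rightarrow> ('a \<Rightarrow> 'a \<Rightarrow> bool) \<Rightarrow> 'a set \<Rightarrow> 'a \<Rightarrow> 'a \<Rightarrow> ('a \<Rightarrow> int)" where
  "prof V E R x z = (\<lambda>s\<in>R. int (dist V E z s) - int (dist V E z x))"

definition milestones :: "'a set \<Rightarrow> ('a \<Rightarrow> 'a \<Rightarrow> bool) \<Rightarrow> 'a set \<Rightarrow> 'a list \<Rightarrow> 'a set" where
  "milestones V E R P = {P ! i | i. i < length P \<and>
      (Suc i = length P \<or> prof V E R (last P) (P ! i) \<noteq> prof V E R (last P) (P ! Suc i))}"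

end

theory Submission
  imports Defs
begin

text \<open>Let p_0, ..., p_m be the vertices of P, so that x = p_m. As P is a shortest path to R,
  dist(p_i, s) >= m - i = dist(p_i, x) for every s in R. Hence prof[p_i](s) = dist(p_i, s) - (m - i)
  is nonnegative, and it is nondecreasing in i because p_i and p_(i+1) are adjacent; at i = m it is
  dist(x, s) < |R| because G[R] is connected. So the sum of the |R| coordinates of the profile grows
  by less than |R|^2 along P, while every milestone other than x increases it by at least one.\<close>

lemma walk_iff_successively:
  "walk V E xs \<longleftrightarrow> xs \<noteq> [] \<and> set xs \<subseteq> V \<and> successively E xs"
  by (simp add: walk_def successively_conv_nth)

lemma walk_take: "walk V E xs \<Longrightarrow> 0 < n \<Longrightarrow> walk V E (take n xs)"
  using successively_append_iff[of E "take n xs" "drop n xs"] set_take_subset[of n xs]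
  by (auto simp: walk_iff_successively)

lemma walk_drop: "walk V E xs \<Longrightarrow> n < length xs \<Longrightarrow> walk V E (drop n xs)"
  using successively_append_iff[of E "take n xs" "drop n xs"] set_drop_subset[of n xs]
  by (auto simp: walk_iff_successively)

lemma walk_join:
  assumes "walk V E xs" "walk V E ys" "last xs = hd ys"
  shows "walk V E (xs @ tl ys)" "hd (xs @ tl ys) = hd xs" "last (xs @ tl ys) = last ys"
    "length (xs @ tl ys) = length xs + length ys - 1"
proof -
  obtain y zs where ys: "ys = y # zs"
    using assms(2) by (cases ys) (auto simp: walk_def)
  have "xs \<noteq> []"
    using assms(1) by (auto simp: walk_def)
  with assms ys show "walk V E (xs @ tl ys)" "hd (xs @ tl ys) = hd xs"
    "last (xs @ tl ys) = last ys" "length (xs @ tl ys) = length xs + length ys - 1"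
    by (auto simp: walk_iff_successively successively_append_iff successively_Cons last_append)
qed

lemma walk_remove_loop: "walk V E (a @ [y] @ b @ [y] @ c) \<Longrightarrow> walk V E (a @ [y] @ c)"
  by (auto simp: walk_iff_successively successively_append_iff successively_Cons)

definition reachable :: "'a set \<Rightarrow> ('a \<Rightarrow> 'a \<Rightarrow> bool) \<Rightarrow> 'a \<Rightarrow> 'a \<Rightarrow> bool" where
  "reachable V E u v \<longleftrightarrow> (\<exists>xs. walk V E xs \<and> hd xs = u \<and> last xs = v)"

lemma dist_le_length:
  assumes "walk V E xs"
  shows "dist V E (hd xs) (last xs) \<le> length xs - 1"
proof -
  have "length xs = Suc (length xs - 1)"
    using assms by (simp add: walk_def)
  then show ?thesis
    unfolding dist_def using assms by (intro Least_le) blast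
qed

lemma obtain_shortest_walk:
  assumes "reachable V E u v"
  obtains xs where "walk V E xs" "hd xs = u" "last xs = v" "length xs = Suc (dist V E u v)"
proof -
  obtain ys where "walk V E ys" "hd ys = u" "last ys = v"
    using assms unfolding reachable_def by blast
  moreover have "length ys = Suc (length ys - 1)"
    using \<open>walk V E ys\<close> by (simp add: walk_def)
  ultimately have "\<exists>n xs. walk V E xs \<and> hd xs = u \<and> last xs = v \<and> length xs = Suc n"
    by blast
  then have "\<exists>xs. walk V E xs \<and> hd xs = u \<and> last xs = v \<and> length xs = Suc (dist V E u v)"
    unfolding dist_def by (rule LeastI_ex)
  with that show ?thesis
    by blast
qed

lemma dist_le_Suc_dist_neighbour:
  assumes "walk V E [u, v]" "reachable V E v w"
  shows "dist V E u w \<le> Suc (dist V E v w)"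
proof -
  obtain xs where xs: "walk V E xs" "hd xs = v" "last xs = w" "length xs = Suc (dist V E v w)"
    using assms(2) by (rule obtain_shortest_walk)
  show ?thesis
    using dist_le_length[OF walk_join(1)[OF assms(1) xs(1)]] walk_join(2-4)[OF assms(1) xs(1)] xs
    by simp
qed

lemma obtain_distinct_walk:
  assumes "walk V E xs"
  obtains ys where "walk V E ys" "distinct ys" "set ys \<subseteq> set xs" "hd ys = hd xs" "last ys = last xs"
  using assms
proof (induction "length xs" arbitrary: xs rule: less_induct)
  case less
  show ?case
  proof (cases "distinct xs")
    case True
    then show ?thesis using less.prems by blast
  next
    case False
    then obtain a y b c where xs: "xs = a @ [y] @ b @ [y] @ c"
      using not_distinct_decomp by blast
    let ?ys = "a @ [y] @ c"
    have "hd ?ys = hd xs" "last ?ys = last xs" "set ?ys \<subseteq> set xs"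
      using xs by (cases a; cases c; auto)+
    moreover have "length ?ys < length xs" "walk V E ?ys"
      using xs less.prems(2) walk_remove_loop by auto
    ultimately show ?thesis
      using less.hyps[of ?ys] less.prems(1) by (metis order.trans)
  qed
qed

lemma dist_less_card:
  assumes "walk V E xs" "set xs \<subseteq> S" "finite S"
  shows "dist V E (hd xs) (last xs) < card S"
proof -
  obtain ys where ys: "walk V E ys" "distinct ys" "set ys \<subseteq> set xs" "hd ys = hd xs" "last ys = last xs"
    using assms(1) by (rule obtain_distinct_walk)
  have "dist V E (hd xs) (last xs) < length ys"
    using dist_le_length[OF ys(1)] ys(1,4,5) by (cases ys) (auto simp: walk_def)
  also have "\<dots> = card (set ys)"
    using ys(2) by (simp add: distinct_card)
  also have "\<dots> \<le> card S"
    using ys(3) assms(2,3) by (intro card_mono) auto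
  finally show ?thesis .
qed

lemma card_change_steps_le_total_increase:
  fixes f :: "nat \<Rightarrow> 'b \<Rightarrow> int"
  assumes "finite S" and mono: "\<And>i s. i < m \<Longrightarrow> s \<in> S \<Longrightarrow> f i s \<le> f (Suc i) s"
  shows "int (card {i. i < m \<and> (\<exists>s\<in>S. f i s \<noteq> f (Suc i) s)}) \<le> (\<Sum>s\<in>S. f m s - f 0 s)"
  using mono
proof (induction m)
  case 0
  then show ?case by simp
next
  case (Suc m)
  let ?changes = "\<lambda>m. {i. i < m \<and> (\<exists>s\<in>S. f i s \<noteq> f (Suc i) s)}"
  let ?increase = "\<Sum>s\<in>S. f (Suc m) s - f m s"
  have IH: "int (card (?changes m)) \<le> (\<Sum>s\<in>S. f m s - f 0 s)"
    using Suc by simp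
  have total: "(\<Sum>s\<in>S. f (Suc m) s - f 0 s) = (\<Sum>s\<in>S. f m s - f 0 s) + ?increase"
    by (simp add: sum.distrib[symmetric])
  have step_nonneg: "0 \<le> f (Suc m) s - f m s" if "s \<in> S" for s
    using Suc.prems that by simp
  show ?case
  proof (cases "\<exists>s\<in>S. f m s \<noteq> f (Suc m) s")
    case True
    then obtain s where s: "s \<in> S" "f m s \<noteq> f (Suc m) s" by blast
    have "1 \<le> f (Suc m) s - f m s"
      using s step_nonneg by force
    also have "\<dots> \<le> ?increase"
      using s assms(1) step_nonneg by (intro member_le_sum) auto
    finally have "1 \<le> ?increase" .
    moreover have "?changes (Suc m) = insert m (?changes m)"
      using True by auto
    ultimately show ?thesis
      using IH total by simp
  next
    case False
    then have "?changes (Suc m) = ?changes m"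
      using less_Suc_eq by auto
    moreover have "0 \<le> ?increase"
      using step_nonneg by (intro sum_nonneg) auto
    ultimately show ?thesis
      using IH total by simp
  qed
qed

locale shortest_path_to_connected_set =
  fixes V :: "'a set" and E :: "'a \<Rightarrow> 'a \<Rightarrow> bool" and R :: "'a set" and v0 :: 'a and P :: "'a list"
  assumes shortest_path: "shortest_path_to V E R v0 P"
    and connected: "connected_set V E R"
begin

abbreviation profile :: "nat \<Rightarrow> 'a \<Rightarrow> int" where
  "profile i \<equiv> prof V E R (last P) (P ! i)"

lemma walk_P: "walk V E P"
  using shortest_path by (simp add: shortest_path_to_def)

lemma P_nonempty: "P \<noteq> []"
  using walk_P by (simp add: walk_def)

lemma hd_P: "hd P = v0"
  using shortest_path by (simp add: shortest_path_to_def)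

lemma length_le_walk_to_R: "walk V E W \<Longrightarrow> hd W = v0 \<Longrightarrow> last W \<in> R \<Longrightarrow> length P \<le> length W"
  using shortest_path by (simp add: shortest_path_to_def)

lemma last_P_in_R: "last P \<in> R"
  using shortest_path by (simp add: shortest_path_to_def)

lemma reachable_from_path_to_R:
  assumes "i < length P" "s \<in> R"
  shows "reachable V E (P ! i) s"
proof -
  obtain xs where xs: "walk V E xs" "hd xs = last P" "last xs = s"
    using connected last_P_in_R assms(2) unfolding connected_set_def by blast
  have suffix: "walk V E (drop i P)" "hd (drop i P) = P ! i" "last (drop i P) = last P"
    using walk_drop[OF walk_P assms(1)] hd_drop_conv_nth[OF assms(1)] assms(1) by simp_all
  show ?thesis
    unfolding reachable_def by (metis walk_join(1-3) suffix xs)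
qed

lemma remaining_length_le_dist:
  assumes "i < length P" "s \<in> R"
  shows "length P - 1 - i \<le> dist V E (P ! i) s"
proof -
  obtain xs where xs: "walk V E xs" "hd xs = P ! i" "last xs = s" "length xs = Suc (dist V E (P ! i) s)"
    using reachable_from_path_to_R[OF assms] by (rule obtain_shortest_walk)
  have prefix: "walk V E (take (Suc i) P)" "hd (take (Suc i) P) = v0" "last (take (Suc i) P) = P ! i"
    using walk_take[OF walk_P] hd_P assms(1) P_nonempty by (simp_all add: last_conv_nth)
  note detour = walk_join[OF prefix(1) xs(1)]
  have "length P \<le> length (take (Suc i) P @ tl xs)"
    using detour prefix xs(2,3) assms(2) by (intro length_le_walk_to_R) auto
  then show ?thesis
    using detour(4) xs(4) assms(1) by simp
qed

lemma dist_nth_last: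
  assumes "i < length P"
  shows "dist V E (P ! i) (last P) = length P - 1 - i"
  using remaining_length_le_dist[OF assms last_P_in_R] dist_le_length[OF walk_drop[OF walk_P assms]]
    hd_drop_conv_nth[OF assms] assms by simp

lemma profile_eq:
  assumes "i < length P" "s \<in> R"
  shows "profile i s = int (dist V E (P ! i) s) - int (length P - 1 - i)"
  using assms dist_nth_last by (simp add: prof_def)

lemma profile_nonneg:
  assumes "i < length P" "s \<in> R"
  shows "0 \<le> profile i s"
proof -
  have "int (length P - 1 - i) \<le> int (dist V E (P ! i) s)"
    using remaining_length_le_dist[OF assms] by (rule of_nat_mono)
  then show ?thesis
    using profile_eq[OF assms] by linarith
qed

lemma profile_mono:
  assumes "Suc i < length P" "s \<in> R"
  shows "profile i s \<le> profile (Suc i) s"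
proof -
  have "walk V E [P ! i, P ! Suc i]"
    using walk_P assms(1) by (auto simp: walk_def)
  then have "dist V E (P ! i) s \<le> Suc (dist V E (P ! Suc i) s)"
    using reachable_from_path_to_R[OF assms] by (rule dist_le_Suc_dist_neighbour)
  then show ?thesis
    using profile_eq[of i s] profile_eq[of "Suc i" s] assms by simp
qed

lemma profile_last_less_card:
  assumes "finite R" "s \<in> R"
  shows "profile (length P - 1) s < int (card R)"
proof -
  obtain xs where "walk V E xs" "set xs \<subseteq> R" "hd xs = last P" "last xs = s"
    using connected last_P_in_R assms(2) unfolding connected_set_def by blast
  then have "dist V E (last P) s < card R"
    using dist_less_card[of V E xs R] assms(1) by simp
  moreover have "P ! (length P - 1) = last P"
    using P_nonempty by (simp add: last_conv_nth)
  ultimately show ?thesis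
    using profile_eq[of "length P - 1" s] assms(2) P_nonempty by simp
qed

lemma card_profile_changes_le:
  assumes "finite R"
  shows "card {i. i < length P - 1 \<and> profile i \<noteq> profile (Suc i)} \<le> (card R)\<^sup>2"
proof -
  have "profile i \<noteq> profile (Suc i) \<longleftrightarrow> (\<exists>s\<in>R. profile i s \<noteq> profile (Suc i) s)" for i
    by (auto simp: prof_def fun_eq_iff)
  then have "int (card {i. i < length P - 1 \<and> profile i \<noteq> profile (Suc i)})
      \<le> (\<Sum>s\<in>R. profile (length P - 1) s - profile 0 s)"
    using card_change_steps_le_total_increase[OF assms, of "length P - 1" profile] profile_mono
    by simp
  also have "\<dots> \<le> (\<Sum>s\<in>R. int (card R))"
  proof (intro sum_mono)
    fix s
    assume "s \<in> R"
    then show "profile (length P - 1) s - profile 0 s \<le> int (card R)"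
      using profile_nonneg[of 0 s] profile_last_less_card[OF assms \<open>s \<in> R\<close>] P_nonempty by simp
  qed
  also have "\<dots> = int ((card R)\<^sup>2)"
    by (simp add: power2_eq_square)
  finally show ?thesis
    by linarith
qed

lemma milestones_subset:
  "milestones V E R P \<subseteq>
     (!) P ` insert (length P - 1) {i. i < length P - 1 \<and> profile i \<noteq> profile (Suc i)}"
proof
  fix v
  assume "v \<in> milestones V E R P"
  then obtain i where i: "v = P ! i" "i < length P" "Suc i = length P \<or> profile i \<noteq> profile (Suc i)"
    unfolding milestones_def by blast
  then have "i \<in> insert (length P - 1) {i. i < length P - 1 \<and> profile i \<noteq> profile (Suc i)}"
    by auto
  then show "v \<in> (!) P ` insert (length P - 1) {i. i < length P - 1 \<and> profile i \<noteq> profile (Suc i)}"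
    using i(1) by blast
qed

end

theorem lemma3p2:
  fixes V :: "'a set" and E :: "'a \<Rightarrow> 'a \<Rightarrow> bool" and R :: "'a set" and v0 :: 'a and P :: "'a list"
  assumes "graph V E" and "connected_set V E R" and "v0 \<in> V"
    and "shortest_path_to V E R v0 P"
  shows "card (milestones V E R P) \<le> (card R)\<^sup>2 + 1"
proof -
  interpret shortest_path_to_connected_set V E R v0 P
    using assms(2,4) by unfold_locales
  have "finite R"
    using assms(1,2) finite_subset unfolding graph_def connected_set_def by blast
  let ?changes = "{i. i < length P - 1 \<and> profile i \<noteq> profile (Suc i)}"
  have "card (milestones V E R P) \<le> card ((!) P ` insert (length P - 1) ?changes)"
    using milestones_subset by (intro card_mono) auto
  also have "\<dots> \<le> card (insert (length P - 1) ?changes)"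
    by (rule card_image_le) auto
  also have "\<dots> \<le> Suc (card ?changes)"
    by (simp add: card_insert_if)
  also have "\<dots> \<le> (card R)\<^sup>2 + 1"
    using card_profile_changes_le[OF \<open>finite R\<close>] by simp
  finally show ?thesis .
qed

end
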